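(* The locus of the Nagel point $X_8$ (triangle center function $h=\dfrac{s_2+s_3-s_1}{s_1}$) over the 3-periodics of $E$ is the ellipse $x^2/a_8^2+y^2/b_8^2=1$ with $a_8=\dfrac{(b^2-\delta)^2}{a\,c^2}$, $b_8=\dfrac{(a^2-\delta)^2}{b\,c^2}$.
   Context: Fix real numbers $a>b>0$, let $E$ be the ellipse $x^2/a^2+y^2/b^2=1$, $c^2=a^2-b^2$ and $\delta=\sqrt{a^4-a^2b^2+b^4}$. A 3-periodic is a non-degenerate triangle $P_1P_2P_3$ with all vertices on $E$ such that at each vertex $P_j$ the normal line to $E$ at $P_j$ bisects the interior angle of the triangle at $P_j$. For a triangle let $s_1=|P_2P_3|$, $s_2=|P_3P_1|$, $s_3=|P_1P_2|$. Given a triangle center function $h(s_1,s_2,s_3)$, the center $X_h$ is the point with trilinears $p:q:r=h(s_1,s_2,s_3):h(s_2,s_3,s_1):h(s_3,s_1,s_2)$, i.e. the Cartesian point $\dfrac{p s_1P_1+q s_2P_2+r s_3P_3}{p s_1+q s_2+r s_3}$. The locus of $X_h$ is the set of points $X_h(T)$ over all 3-periodics $T$. *)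

theory Defs
  imports "HOL-Analysis.Analysis"
begin

type_synonym pt = "real \<times> real"

definition on_ellipse :: "real \<Rightarrow> real \<Rightarrow> pt \<Rightarrow> bool" where
  "on_ellipse a b P \<longleftrightarrow> (fst P)^2 / a^2 + (snd P)^2 / b^2 = 1"

definition det2 :: "pt \<Rightarrow> pt \<Rightarrow> real" where
  "det2 u v = fst u * snd v - snd u * fst v"

text \<open>The normal line to the ellipse at P (direction (x/a^2, y/b^2)) bisects the interior
  angle at P of triangle P Q R: the normal direction is parallel to the interior angle
  bisector direction (Q-P)/|Q-P| + (R-P)/|R-P|.\<close>
definition normal_bisects :: "real \<Rightarrow> real \<Rightarrow> pt \<Rightarrow> pt \<Rightarrow> pt \<Rightarrow> bool" where
  "normal_bisects a b P Q R \<longleftrightarrow>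
     (let n = (fst P / a^2, snd P / b^2);
          w = (1 / dist Q P) *\<^sub>R (Q - P) + (1 / dist R P) *\<^sub>R (R - P)
      in det2 n w = 0)"

definition three_periodic :: "real \<Rightarrow> real \<Rightarrow> pt \<Rightarrow> pt \<Rightarrow> pt \<Rightarrow> bool" where
  "three_periodic a b P1 P2 P3 \<longleftrightarrow>
     on_ellipse a b P1 \<and> on_ellipse a b P2 \<and> on_ellipse a b P3 \<and>
     det2 (P2 - P1) (P3 - P1) \<noteq> 0 \<and>
     normal_bisects a b P1 P2 P3 \<and> normal_bisects a b P2 P3 P1 \<and> normal_bisects a b P3 P1 P2"

text \<open>Triangle center with trilinears h(s1,s2,s3):h(s2,s3,s1):h(s3,s1,s2).\<close>
definition tri_center :: "(real \<Rightarrow> real \<Rightarrow> real \<Rightarrow> real) \<Rightarrow> pt \<Rightarrow> pt \<Rightarrow> pt \<Rightarrow> pt" where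
  "tri_center h P1 P2 P3 =
     (let s1 = dist P2 P3; s2 = dist P3 P1; s3 = dist P1 P2;
          p = h s1 s2 s3; q = h s2 s3 s1; r = h s3 s1 s2
      in (1 / (p * s1 + q * s2 + r * s3)) *\<^sub>R
           ((p * s1) *\<^sub>R P1 + (q * s2) *\<^sub>R P2 + (r * s3) *\<^sub>R P3))"

definition locus :: "real \<Rightarrow> real \<Rightarrow> (real \<Rightarrow> real \<Rightarrow> real \<Rightarrow> real) \<Rightarrow> pt set" where
  "locus a b h = {tri_center h P1 P2 P3 | P1 P2 P3. three_periodic a b P1 P2 P3}"

definition nagel_h :: "real \<Rightarrow> real \<Rightarrow> real \<Rightarrow> real" where
  "nagel_h s1 s2 s3 = (s2 + s3 - s1) / s1"

end

theory Submission
  imports Defs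
begin

text \<open>
  Write the vertices as P = (a p, b q) with (p, q) on the unit circle.  The normal at P bisects
  the angle at P iff the other two vertices make equal angles with the tangent at P, i.e. iff
  their distances to that tangent are proportional to their distances from P.  Hence a triangle
  is 3-periodic iff the tangent gap 1 - p p' - q q' of every pair of vertices is K times the
  side length, for one constant K.  The squared side is the gap times an affine function of
  p p' and q q', so this is the symmetric bilinear relation (1 - e) p p' + (1 + e) q q' = C with
  e = K^2 c^2 and C = 1 - K^2 (a^2 + b^2), and a Poncelet-type closure argument forces
  e^2 = 1 + 2 C, which determines e.  The two partners of a vertex are then rational in its
  coordinates and in one square root r, the Nagel point is rational in the vertex alone, and
  the image of the circle is the stated ellipse.
\<close>

text \<open>The tangent to the ellipse at P is the line where the gap vanishes; for P on the ellipse
  the gap of Q is proportional to the distance from Q to that tangent.\<close>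
definition tangent_gap :: "real \<Rightarrow> real \<Rightarrow> pt \<Rightarrow> pt \<Rightarrow> real" where
  "tangent_gap a b P Q = 1 - fst P * fst Q / a^2 - snd P * snd Q / b^2"

lemma tangent_gap_commute: "tangent_gap a b P Q = tangent_gap a b Q P"
  unfolding tangent_gap_def by (simp add: mult.commute)

lemma det2_cyclic: "det2 (P3 - P2) (P1 - P2) = det2 (P2 - P1) (P3 - P1)"
  unfolding det2_def by (simp add: algebra_simps)

lemma det2_scaleR: "det2 (s *\<^sub>R u) (t *\<^sub>R v) = s * t * det2 u v"
  unfolding det2_def by (simp add: algebra_simps)

lemma det2_sum_of_units_eq_0_iff:
  fixes n u v :: pt
  assumes "norm u = 1" "norm v = 1" "det2 u v \<noteq> 0"
  shows "det2 n (u + v) = 0 \<longleftrightarrow> inner n u = inner n v"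
proof -
  obtain n1 n2 u1 u2 v1 v2 where uv: "n = (n1, n2)" "u = (u1, u2)" "v = (v1, v2)"
    by (metis prod.collapse)
  have uu: "u1^2 + u2^2 = 1" and vv: "v1^2 + v2^2 = 1"
    using assms(1,2) unfolding uv norm_Pair by simp_all
  have d: "u1 * v2 - u2 * v1 \<noteq> 0" using assms(3) unfolding uv det2_def by simp
  define D where "D = n1 * (u2 + v2) - n2 * (u1 + v1)"
  define I where "I = n1 * (u1 - v1) + n2 * (u2 - v2)"
  \<comment> \<open>u + v and u - v are orthogonal, so each of D, I is a multiple of the other.\<close>
  have "I * (u1 + v1) = - D * (u2 - v2)" "I * (u2 + v2) = D * (u1 - v1)"
    using uu vv unfolding D_def I_def by algebra+
  moreover have "(u1 + v1, u2 + v2) \<noteq> (0, 0)" "(u1 - v1, u2 - v2) \<noteq> (0, 0)"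
    using d by (auto simp: add_eq_0_iff)
  ultimately have "D = 0 \<longleftrightarrow> I = 0" by auto
  then show ?thesis unfolding uv D_def I_def det2_def by (simp add: algebra_simps)
qed

lemma inner_normal_chord:
  assumes "on_ellipse a b P"
  shows "inner (fst P / a^2, snd P / b^2) (Q - P) = - tangent_gap a b P Q"
proof -
  obtain x y x' y' where "P = (x, y)" "Q = (x', y')" by (metis prod.collapse)
  with assms show ?thesis
    unfolding on_ellipse_def tangent_gap_def by (simp add: algebra_simps diff_divide_distrib power2_eq_square)
qed

lemma normal_bisects_iff_gap_ratios:
  assumes "on_ellipse a b P" "det2 (Q - P) (R - P) \<noteq> 0"
  shows "normal_bisects a b P Q R \<longleftrightarrow>
    tangent_gap a b P Q / dist P Q = tangent_gap a b P R / dist P R"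
proof -
  define n where "n = (fst P / a^2, snd P / b^2)"
  define u where "u = (1 / dist Q P) *\<^sub>R (Q - P)"
  define v where "v = (1 / dist R P) *\<^sub>R (R - P)"
  have "Q \<noteq> P" "R \<noteq> P" using assms(2) unfolding det2_def by auto
  then have dQ: "dist Q P > 0" and dR: "dist R P > 0" by simp_all
  have "norm u = 1" "norm v = 1" using dQ dR unfolding u_def v_def dist_norm by simp_all
  moreover have "det2 u v \<noteq> 0" using assms(2) dQ dR unfolding u_def v_def det2_scaleR by simp
  ultimately have "det2 n (u + v) = 0 \<longleftrightarrow> inner n u = inner n v"
    by (rule det2_sum_of_units_eq_0_iff)
  moreover have "inner n u = - tangent_gap a b P Q / dist P Q" "inner n v = - tangent_gap a b P R / dist P R"
    using inner_normal_chord[OF assms(1)] unfolding n_def u_def v_def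
    by (simp_all add: dist_commute)
  ultimately show ?thesis
    unfolding normal_bisects_def Let_def n_def u_def v_def by simp
qed

lemma three_periodic_iff_gap_ratio:
  assumes "on_ellipse a b P1" "on_ellipse a b P2" "on_ellipse a b P3"
    and "det2 (P2 - P1) (P3 - P1) \<noteq> 0"
  shows "three_periodic a b P1 P2 P3 \<longleftrightarrow>
    (\<exists>K. tangent_gap a b P1 P2 = K * dist P1 P2 \<and> tangent_gap a b P1 P3 = K * dist P1 P3
       \<and> tangent_gap a b P2 P3 = K * dist P2 P3)"
proof -
  have "P1 \<noteq> P2" "P1 \<noteq> P3" "P2 \<noteq> P3" using assms(4) unfolding det2_def by auto
  then have pos: "dist P1 P2 > 0" "dist P1 P3 > 0" "dist P2 P3 > 0" by simp_all
  define g where "g P Q = tangent_gap a b P Q / dist P Q" for P Q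
  have g_commute: "g P Q = g Q P" for P Q
    unfolding g_def by (simp add: tangent_gap_commute dist_commute)
  have "normal_bisects a b P1 P2 P3 \<longleftrightarrow> g P1 P2 = g P1 P3"
    using normal_bisects_iff_gap_ratios[OF assms(1,4)] unfolding g_def .
  moreover have "normal_bisects a b P2 P3 P1 \<longleftrightarrow> g P2 P3 = g P1 P2"
    using normal_bisects_iff_gap_ratios[of a b P2 P3 P1] assms(2,4)
    unfolding g_def det2_cyclic by (simp add: g_commute[unfolded g_def])
  moreover have "normal_bisects a b P3 P1 P2 \<longleftrightarrow> g P1 P3 = g P2 P3"
    using normal_bisects_iff_gap_ratios[of a b P3 P1 P2] assms(3,4)
    unfolding g_def det2_cyclic[of P1 P3 P2] det2_cyclic[of P3 P2 P1]
    by (simp add: g_commute[unfolded g_def])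
  ultimately have "three_periodic a b P1 P2 P3 \<longleftrightarrow>
      g P1 P2 = g P1 P3 \<and> g P2 P3 = g P1 P2 \<and> g P1 P3 = g P2 P3"
    using assms unfolding three_periodic_def by simp
  also have "\<dots> \<longleftrightarrow> (\<exists>K. g P1 P2 = K \<and> g P1 P3 = K \<and> g P2 P3 = K)" by auto
  also have "\<dots> \<longleftrightarrow> (\<exists>K. tangent_gap a b P1 P2 = K * dist P1 P2
      \<and> tangent_gap a b P1 P3 = K * dist P1 P3 \<and> tangent_gap a b P2 P3 = K * dist P2 P3)"
    using pos unfolding g_def by (simp add: field_simps)
  finally show ?thesis .
qed

lemma on_ellipse_scaled:
  assumes "a \<noteq> 0" "b \<noteq> 0"
  shows "on_ellipse a b (a * p, b * q) \<longleftrightarrow> p^2 + q^2 = 1"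
  using assms unfolding on_ellipse_def by (simp add: power_mult_distrib)

lemma tangent_gap_scaled:
  assumes "a \<noteq> 0" "b \<noteq> 0"
  shows "tangent_gap a b (a * p, b * q) (a * p', b * q') = 1 - p * p' - q * q'"
  using assms unfolding tangent_gap_def by (simp add: power2_eq_square)

lemma det2_scaled:
  "det2 ((a * p2, b * q2) - (a * p1, b * q1)) ((a * p3, b * q3) - (a * p1, b * q1))
     = a * b * ((p2 - p1) * (q3 - q1) - (q2 - q1) * (p3 - p1))"
  unfolding det2_def by (simp add: algebra_simps)

lemma dist_scaled_sq:
  fixes a b p q p' q' :: real
  assumes "p^2 + q^2 = 1" "p'^2 + q'^2 = 1"
  shows "(dist (a * p, b * q) (a * p', b * q'))^2
    = (1 - p * p' - q * q') * (a^2 + b^2 - (a^2 - b^2) * (p * p' - q * q'))"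
  using assms unfolding dist_Pair_Pair dist_real_def by simp algebra

lemma unit_gap_pos:
  fixes p q p' q' :: real
  assumes "p^2 + q^2 = 1" "p'^2 + q'^2 = 1" "(p, q) \<noteq> (p', q')"
  shows "1 - p * p' - q * q' > 0"
proof -
  have "2 * (1 - p * p' - q * q') = (p - p')^2 + (q - q')^2" using assms(1,2) by algebra
  moreover have "(p - p')^2 + (q - q')^2 > 0" using assms(3) by (simp add: sum_power2_gt_zero_iff)
  ultimately show ?thesis by simp
qed

lemma unit_circle_det_ne_0:
  fixes p1 q1 p2 q2 p3 q3 :: real
  assumes "p1^2 + q1^2 = 1" "p2^2 + q2^2 = 1" "p3^2 + q3^2 = 1"
    and "(p1, q1) \<noteq> (p2, q2)" "(p1, q1) \<noteq> (p3, q3)" "(p2, q2) \<noteq> (p3, q3)"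
  shows "(p2 - p1) * (q3 - q1) - (q2 - q1) * (p3 - p1) \<noteq> 0"
proof
  assume "(p2 - p1) * (q3 - q1) - (q2 - q1) * (p3 - p1) = 0"
  moreover have "4 * ((p2 - p1) * (q3 - q1) - (q2 - q1) * (p3 - p1))^2
      = ((p1 - p2)^2 + (q1 - q2)^2) * ((p1 - p3)^2 + (q1 - q3)^2) * ((p2 - p3)^2 + (q2 - q3)^2)"
    using assms(1-3) by algebra
  moreover have nz: "(p1 - p2)^2 + (q1 - q2)^2 \<noteq> 0" "(p1 - p3)^2 + (q1 - q3)^2 \<noteq> 0"
      "(p2 - p3)^2 + (q2 - q3)^2 \<noteq> 0"
    using assms(4-6) by (auto simp: sum_power2_eq_zero_iff)
  ultimately have
    "((p1 - p2)^2 + (q1 - q2)^2) * ((p1 - p3)^2 + (q1 - q3)^2) * ((p2 - p3)^2 + (q2 - q3)^2) = 0"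
    by simp
  with nz show False by auto
qed

lemma unit_gap_eq_ratio_dist_iff:
  fixes a b K p q p' q' :: real
  assumes "K > 0" "p^2 + q^2 = 1" "p'^2 + q'^2 = 1" "(p, q) \<noteq> (p', q')"
  shows "1 - p * p' - q * q' = K * dist (a * p, b * q) (a * p', b * q') \<longleftrightarrow>
    (1 - K^2 * (a^2 - b^2)) * p * p' + (1 + K^2 * (a^2 - b^2)) * q * q' = 1 - K^2 * (a^2 + b^2)"
proof -
  define m where "m = 1 - p * p' - q * q'"
  define L where "L = a^2 + b^2 - (a^2 - b^2) * (p * p' - q * q')"
  have m: "m > 0" unfolding m_def by (rule unit_gap_pos[OF assms(2-4)])
  have d: "(dist (a * p, b * q) (a * p', b * q'))^2 = m * L"
    unfolding m_def L_def by (rule dist_scaled_sq[OF assms(2,3)])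
  have "m = K * dist (a * p, b * q) (a * p', b * q') \<longleftrightarrow>
      m^2 = (K * dist (a * p, b * q) (a * p', b * q'))^2"
    using m assms(1) by (intro power2_eq_iff_nonneg[symmetric]) simp_all
  also have "\<dots> \<longleftrightarrow> m^2 = K^2 * (m * L)" unfolding power_mult_distrib d ..
  also have "\<dots> \<longleftrightarrow> m = K^2 * L" using m by (auto simp: power2_eq_square)
  also have "\<dots> \<longleftrightarrow>
      (1 - K^2 * (a^2 - b^2)) * p * p' + (1 + K^2 * (a^2 - b^2)) * q * q' = 1 - K^2 * (a^2 + b^2)"
    unfolding m_def L_def by (rule iffI; simp add: algebra_simps)
  finally show ?thesis unfolding m_def .
qed

lemma paired_weight_pos:
  fixes e C p q x y :: real
  assumes "p^2 + q^2 = 1" "(1 - e) * p * x + (1 + e) * q * y = C" "e > 0" "C < 1 - e"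
  shows "((1 - e) * p)^2 + ((1 + e) * q)^2 > 0"
proof (rule ccontr)
  assume "\<not> ?thesis"
  then have "(1 - e) * p = 0" "(1 + e) * q = 0" using sum_power2_gt_zero_iff by blast+
  moreover from this have "C = 0" using assms(2) by (metis add.right_neutral mult_zero_left)
  ultimately have "p = 0" "q = 0" using assms(3,4) by simp_all
  then show False using assms(1) by simp
qed

text \<open>Decompose the point along the vector ((1-e)p, (1+e)q) and its rotation by a right angle;
  the first coordinate is fixed by the pairing, the second is r.\<close>
lemma unit_paired_iff:
  fixes e C p q x y N :: real
  assumes N: "N = ((1 - e) * p)^2 + ((1 + e) * q)^2" "N > 0"
  shows "x^2 + y^2 = 1 \<and> (1 - e) * p * x + (1 + e) * q * y = C \<longleftrightarrow>
    (\<exists>r. r^2 = N - C^2 \<and> x = (C * (1 - e) * p - r * (1 + e) * q) / N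
                     \<and> y = (C * (1 + e) * q + r * (1 - e) * p) / N)"
proof
  assume "x^2 + y^2 = 1 \<and> (1 - e) * p * x + (1 + e) * q * y = C"
  then have xy: "x^2 + y^2 = 1" and g: "(1 - e) * p * x + (1 + e) * q * y = C" by simp_all
  define r where "r = (1 - e) * p * y - (1 + e) * q * x"
  have "N * x = C * (1 - e) * p - r * (1 + e) * q" "N * y = C * (1 + e) * q + r * (1 - e) * p"
    using N(1) g unfolding r_def by algebra+
  moreover have "C^2 + r^2 = N * (x^2 + y^2)" using N(1) g unfolding r_def by algebra
  ultimately show "\<exists>r. r^2 = N - C^2 \<and> x = (C * (1 - e) * p - r * (1 + e) * q) / N
                     \<and> y = (C * (1 + e) * q + r * (1 - e) * p) / N"
    using N(2) xy by (intro exI[of _ r]) (simp add: field_simps)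
next
  assume "\<exists>r. r^2 = N - C^2 \<and> x = (C * (1 - e) * p - r * (1 + e) * q) / N
                     \<and> y = (C * (1 + e) * q + r * (1 - e) * p) / N"
  then obtain r where r: "r^2 = N - C^2" and xy: "N * x = C * (1 - e) * p - r * (1 + e) * q"
      "N * y = C * (1 + e) * q + r * (1 - e) * p"
    using N(2) by auto
  have "N^2 * (x^2 + y^2) = N^2" "N * ((1 - e) * p * x + (1 + e) * q * y) = N * C"
    using N(1) r xy by algebra+
  with N(2) show "x^2 + y^2 = 1 \<and> (1 - e) * p * x + (1 + e) * q * y = C" by simp
qed

lemma paired_points_eq:
  fixes e C p q x2 y2 x3 y3 N :: real
  assumes N: "N = ((1 - e) * p)^2 + ((1 + e) * q)^2" "N > 0"
    and "x2^2 + y2^2 = 1" "x3^2 + y3^2 = 1" "(x2, y2) \<noteq> (x3, y3)"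
    and "(1 - e) * p * x2 + (1 + e) * q * y2 = C" "(1 - e) * p * x3 + (1 + e) * q * y3 = C"
  shows "\<exists>r. r^2 = N - C^2
    \<and> x2 = (C * (1 - e) * p - r * (1 + e) * q) / N \<and> y2 = (C * (1 + e) * q + r * (1 - e) * p) / N
    \<and> x3 = (C * (1 - e) * p + r * (1 + e) * q) / N \<and> y3 = (C * (1 + e) * q - r * (1 - e) * p) / N"
proof -
  obtain r2 where r2: "r2^2 = N - C^2" "x2 = (C * (1 - e) * p - r2 * (1 + e) * q) / N"
      "y2 = (C * (1 + e) * q + r2 * (1 - e) * p) / N"
    using unit_paired_iff[OF N] assms(3,6) by blast
  obtain r3 where r3: "r3^2 = N - C^2" "x3 = (C * (1 - e) * p - r3 * (1 + e) * q) / N"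
      "y3 = (C * (1 + e) * q + r3 * (1 - e) * p) / N"
    using unit_paired_iff[OF N] assms(4,7) by blast
  have "r3 \<noteq> r2" using assms(5) r2 r3 by auto
  with r2(1) r3(1) have "r3 = - r2" by (metis power2_eq_iff)
  with r2 r3 show ?thesis by auto
qed

lemma partners_pairing_defect:
  fixes e C p q r N :: real
  assumes "p^2 + q^2 = 1" "N = ((1 - e) * p)^2 + ((1 + e) * q)^2" "N > 0" "r^2 = N - C^2"
  shows "((1 - e) * ((C * (1 - e) * p - r * (1 + e) * q) / N)
              * ((C * (1 - e) * p + r * (1 + e) * q) / N)
        + (1 + e) * ((C * (1 + e) * q + r * (1 - e) * p) / N)
              * ((C * (1 + e) * q - r * (1 - e) * p) / N)
        - C) * N
      = (e^2 - 1 - 2 * C) * (e + 1 - C - 2 * e * p^2)"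
proof -
  define X2 where "X2 = C * (1 - e) * p - r * (1 + e) * q"
  define Y2 where "Y2 = C * (1 + e) * q + r * (1 - e) * p"
  define X3 where "X3 = C * (1 - e) * p + r * (1 + e) * q"
  define Y3 where "Y3 = C * (1 + e) * q - r * (1 - e) * p"
  have "((1 - e) * (X2 / N) * (X3 / N) + (1 + e) * (Y2 / N) * (Y3 / N) - C) * N
      = ((1 - e) * X2 * X3 + (1 + e) * Y2 * Y3 - C * N^2) / N"
    using assms(3) by (simp add: field_simps power2_eq_square)
  also have "(1 - e) * X2 * X3 + (1 + e) * Y2 * Y3 - C * N^2
      = N * ((e^2 - 1 - 2 * C) * (e + 1 - C - 2 * e * p^2))"
    unfolding X2_def Y2_def X3_def Y3_def using assms(1,2,4) by algebra
  finally show ?thesis unfolding X2_def Y2_def X3_def Y3_def using assms(3) by simp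
qed

lemma paired_vertex_eq:
  fixes e C p1 q1 p2 q2 p3 q3 :: real
  assumes "p1^2 + q1^2 = 1" "p2^2 + q2^2 = 1" "p3^2 + q3^2 = 1" "(p2, q2) \<noteq> (p3, q3)"
    and "(1 - e) * p1 * p2 + (1 + e) * q1 * q2 = C" "(1 - e) * p1 * p3 + (1 + e) * q1 * q3 = C"
    and "(1 - e) * p2 * p3 + (1 + e) * q2 * q3 = C" "e > 0" "C < 1 - e"
  shows "(e^2 - 1 - 2 * C) * (e + 1 - C - 2 * e * p1^2) = 0"
proof -
  define N where "N = ((1 - e) * p1)^2 + ((1 + e) * q1)^2"
  have N: "N > 0" unfolding N_def using paired_weight_pos[OF assms(1,5,8,9)] .
  then obtain r where r: "r^2 = N - C^2"
      "p2 = (C * (1 - e) * p1 - r * (1 + e) * q1) / N" "q2 = (C * (1 + e) * q1 + r * (1 - e) * p1) / N"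
      "p3 = (C * (1 - e) * p1 + r * (1 + e) * q1) / N" "q3 = (C * (1 + e) * q1 - r * (1 - e) * p1) / N"
    using paired_points_eq[OF N_def N assms(2-6)] by blast
  have "((1 - e) * p2 * p3 + (1 + e) * q2 * q3 - C) * N = (e^2 - 1 - 2 * C) * (e + 1 - C - 2 * e * p1^2)"
    unfolding r(2-5) by (rule partners_pairing_defect[OF assms(1) N_def N r(1)])
  with assms(7) show ?thesis by simp
qed

lemma paired_self_gt:
  fixes e C p q :: real
  assumes "p^2 + q^2 = 1" "e > 0" "C < 1 - e"
  shows "(1 - e) * p * p + (1 + e) * q * q > C"
proof -
  have "(1 - e) * p * p + (1 + e) * q * q = 1 - e + 2 * e * q^2" using assms(1) by algebra
  moreover have "2 * e * q^2 \<ge> 0" using assms(2) by simp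
  ultimately show ?thesis using assms(3) by simp
qed

lemma paired_not_antipodal:
  fixes e C p q x y :: real
  assumes "p^2 + q^2 = 1" "(1 - e) * p * (- p) + (1 + e) * q * (- q) = C"
    and "(1 - e) * p * x + (1 + e) * q * y = C" "(1 - e) * (- p) * x + (1 + e) * (- q) * y = C"
    and "e > 0" "C < 1 - e"
  shows False
proof -
  have "C = 0" using assms(3,4) by (simp add: algebra_simps)
  with assms(2) paired_self_gt[OF assms(1,5,6)] show False by simp
qed

text \<open>If e^2 \<noteq> 1 + 2 C, every vertex satisfies e + 1 - C = 2 e p^2, so two of the vertices are
  antipodal, which the pairing forbids.\<close>
lemma paired_triangle_closure:
  fixes e C p1 q1 p2 q2 p3 q3 :: real
  assumes u: "p1^2 + q1^2 = 1" "p2^2 + q2^2 = 1" "p3^2 + q3^2 = 1"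
    and d: "(p1, q1) \<noteq> (p2, q2)" "(p1, q1) \<noteq> (p3, q3)" "(p2, q2) \<noteq> (p3, q3)"
    and g: "(1 - e) * p1 * p2 + (1 + e) * q1 * q2 = C" "(1 - e) * p1 * p3 + (1 + e) * q1 * q3 = C"
      "(1 - e) * p2 * p3 + (1 + e) * q2 * q3 = C"
    and e: "e > 0" "C < 1 - e"
  shows "e^2 = 1 + 2 * C"
proof (rule ccontr)
  assume ne: "e^2 \<noteq> 1 + 2 * C"
  have g': "(1 - e) * p2 * p1 + (1 + e) * q2 * q1 = C" "(1 - e) * p3 * p1 + (1 + e) * q3 * q1 = C"
      "(1 - e) * p3 * p2 + (1 + e) * q3 * q2 = C"
    using g by (simp_all add: algebra_simps)
  have "e + 1 - C - 2 * e * p1^2 = 0" "e + 1 - C - 2 * e * p2^2 = 0" "e + 1 - C - 2 * e * p3^2 = 0"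
    using paired_vertex_eq[OF u(1,2,3) d(3) g(1,2,3) e] paired_vertex_eq[OF u(2,1,3) d(2) g'(1) g(3,2) e]
      paired_vertex_eq[OF u(3,1,2) d(1) g'(2,3) g(1) e] ne
    by simp_all
  with e(1) have "p2^2 = p1^2" "p3^2 = p1^2" by simp_all
  moreover from this u have "q2^2 = q1^2" "q3^2 = q1^2" by simp_all
  ultimately have "(p2 = - p1 \<and> q2 = - q1) \<or> (p3 = - p1 \<and> q3 = - q1) \<or> (p3 = - p2 \<and> q3 = - q2)"
    using d by (auto simp: power2_eq_iff)
  then show False
  proof (elim disjE conjE)
    assume a: "p2 = - p1" "q2 = - q1"
    show False by (rule paired_not_antipodal[OF u(1) g(1)[unfolded a] g(2) g(3)[unfolded a] e])
  next
    assume a: "p3 = - p1" "q3 = - q1"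
    show False by (rule paired_not_antipodal[OF u(1) g(2)[unfolded a] g(1) g'(3)[unfolded a] e])
  next
    assume a: "p3 = - p2" "q3 = - q2"
    show False by (rule paired_not_antipodal[OF u(2) g(3)[unfolded a] g'(1) g'(2)[unfolded a] e])
  qed
qed

text \<open>The positive root of (a^2 - b^2) e^2 + 2 (a^2 + b^2) e = 3 (a^2 - b^2), which is what
  e^2 = 1 + 2 C becomes for e = K^2 (a^2 - b^2) and C = 1 - K^2 (a^2 + b^2).\<close>
definition periodic_e :: "real \<Rightarrow> real \<Rightarrow> real" where
  "periodic_e a b = (2 * sqrt (a^4 - a^2 * b^2 + b^4) - a^2 - b^2) / (a^2 - b^2)"

lemma periodic_e_sqrt_eq:
  assumes "0 < b" "b < a"
  shows "2 * sqrt (a^4 - a^2 * b^2 + b^4) = (a^2 - b^2) * periodic_e a b + a^2 + b^2"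
  using assms unfolding periodic_e_def by (simp add: power_strict_mono)

lemma periodic_e:
  assumes "0 < b" "b < a"
  shows "(a^2 - b^2) * (periodic_e a b)^2 + 2 * (a^2 + b^2) * periodic_e a b = 3 * (a^2 - b^2)"
    and "0 < periodic_e a b" and "periodic_e a b < 1"
proof -
  define c2 where "c2 = a^2 - b^2"
  define e where "e = periodic_e a b"
  have c2: "c2 > 0" unfolding c2_def using assms by (simp add: power_strict_mono)
  have rad: "4 * (a^4 - a^2 * b^2 + b^4) = (a^2 + b^2)^2 + 3 * c2^2"
    unfolding c2_def by algebra
  have s: "2 * sqrt (a^4 - a^2 * b^2 + b^4) = c2 * e + a^2 + b^2"
    unfolding c2_def e_def by (rule periodic_e_sqrt_eq[OF assms])
  have radp: "a^4 - a^2 * b^2 + b^4 \<ge> 0" using rad by (smt (verit) zero_le_power2)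
  then have "(c2 * e + a^2 + b^2)^2 = (a^2 + b^2)^2 + 3 * c2^2"
    unfolding s[symmetric] rad[symmetric] by (simp add: power_mult_distrib)
  then have "c2 * (c2 * e^2 + 2 * (a^2 + b^2) * e - 3 * c2) = 0" by algebra
  with c2 show q: "(a^2 - b^2) * (periodic_e a b)^2 + 2 * (a^2 + b^2) * periodic_e a b = 3 * (a^2 - b^2)"
    unfolding c2_def e_def by simp
  have "(a^2 + b^2)^2 < 4 * (a^4 - a^2 * b^2 + b^4)" using rad c2 by simp
  then have "a^2 + b^2 < sqrt (4 * (a^4 - a^2 * b^2 + b^4))" by (rule real_less_rsqrt)
  then have "a^2 + b^2 < 2 * sqrt (a^4 - a^2 * b^2 + b^4)" unfolding real_sqrt_mult real_sqrt_four .
  with c2 show e0: "0 < periodic_e a b" unfolding periodic_e_def c2_def by simp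
  have "(a^2 - b^2) * ((periodic_e a b - 1) * (periodic_e a b + 3)) = - 4 * b^2 * periodic_e a b"
    using q by algebra
  also have "\<dots> < 0" using assms e0 by simp
  finally show "periodic_e a b < 1"
    using c2 e0 unfolding c2_def by (simp add: mult_less_0_iff)
qed

lemma periodic_e_unique:
  assumes "0 < b" "b < a" "0 < x" "(a^2 - b^2) * x^2 + 2 * (a^2 + b^2) * x = 3 * (a^2 - b^2)"
  shows "x = periodic_e a b"
proof -
  define e where "e = periodic_e a b"
  have "e > 0" and q: "(a^2 - b^2) * e^2 + 2 * (a^2 + b^2) * e = 3 * (a^2 - b^2)"
    unfolding e_def using periodic_e[OF assms(1,2)] by simp_all
  have "(x - e) * ((a^2 - b^2) * (x + e) + 2 * (a^2 + b^2)) = 0"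
    using assms(4) q by algebra
  moreover have "(a^2 - b^2) * (x + e) + 2 * (a^2 + b^2) > 0"
    using assms \<open>e > 0\<close> by (simp add: power_strict_mono add_pos_pos)
  ultimately show ?thesis unfolding e_def by simp
qed

lemma periodic_e_semi_axes:
  assumes "0 < b" "b < a"
  shows "(b^2 - sqrt (a^4 - a^2 * b^2 + b^4))^2 / (a * (a^2 - b^2))
      = (a^2 - b^2) * (1 + periodic_e a b)^2 / (4 * a)"
    and "(a^2 - sqrt (a^4 - a^2 * b^2 + b^4))^2 / (b * (a^2 - b^2))
      = (a^2 - b^2) * (1 - periodic_e a b)^2 / (4 * b)"
proof -
  have nz: "a^2 - b^2 \<noteq> 0" "a \<noteq> 0" "b \<noteq> 0" using assms by (simp_all add: power_strict_mono)
  have hb: "b^2 - sqrt (a^4 - a^2 * b^2 + b^4) = - ((a^2 - b^2) * (1 + periodic_e a b) / 2)"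
    and ha: "a^2 - sqrt (a^4 - a^2 * b^2 + b^4) = (a^2 - b^2) * (1 - periodic_e a b) / 2"
    using periodic_e_sqrt_eq[OF assms] by (simp_all add: field_simps)
  show "(b^2 - sqrt (a^4 - a^2 * b^2 + b^4))^2 / (a * (a^2 - b^2))
      = (a^2 - b^2) * (1 + periodic_e a b)^2 / (4 * a)"
    unfolding hb using nz by (simp add: field_simps power2_eq_square)
  show "(a^2 - sqrt (a^4 - a^2 * b^2 + b^4))^2 / (b * (a^2 - b^2))
      = (a^2 - b^2) * (1 - periodic_e a b)^2 / (4 * b)"
    unfolding ha using nz by (simp add: field_simps power2_eq_square)
qed

lemma tri_center_nagel_eq:
  fixes P1 P2 P3 :: pt
  assumes "K \<noteq> 0" "m1 \<noteq> 0" "m2 \<noteq> 0" "m3 \<noteq> 0"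
    and "m1 = K * dist P2 P3" "m2 = K * dist P3 P1" "m3 = K * dist P1 P2"
  shows "tri_center nagel_h P1 P2 P3 = (1 / (m1 + m2 + m3)) *\<^sub>R
    ((m2 + m3 - m1) *\<^sub>R P1 + (m3 + m1 - m2) *\<^sub>R P2 + (m1 + m2 - m3) *\<^sub>R P3)"
proof -
  have s: "dist P2 P3 = m1 / K" "dist P3 P1 = m2 / K" "dist P1 P2 = m3 / K"
    using assms by simp_all
  have "tri_center nagel_h P1 P2 P3 =
      (1 / ((m2 + m3 - m1) / K + (m3 + m1 - m2) / K + (m1 + m2 - m3) / K)) *\<^sub>R
        (((m2 + m3 - m1) / K) *\<^sub>R P1 + ((m3 + m1 - m2) / K) *\<^sub>R P2
          + ((m1 + m2 - m3) / K) *\<^sub>R P3)"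
    unfolding tri_center_def Let_def nagel_h_def s using assms(1-4)
    by (simp add: diff_divide_distrib add_divide_distrib)
  also have "\<dots> = (1 / (m1 + m2 + m3)) *\<^sub>R
      ((m2 + m3 - m1) *\<^sub>R P1 + (m3 + m1 - m2) *\<^sub>R P2 + (m1 + m2 - m3) *\<^sub>R P3)"
    using assms(1)
    by (simp add: scaleR_add_right add_divide_distrib[symmetric] diff_divide_distrib[symmetric] add_ac)
  finally show ?thesis .
qed

definition nagel_x :: "real \<Rightarrow> real \<Rightarrow> real" where
  "nagel_x e p = e * (1 + e) * p * (4 * p^2 - (1 + e) * (3 - e)) / ((3 - e) * ((1 + e)^2 - 4 * e * p^2))"

definition nagel_y :: "real \<Rightarrow> real \<Rightarrow> real \<Rightarrow> real" where
  "nagel_y e p q = e * (1 - e) * q * (4 * p^2 - (1 + e)^2) / ((3 + e) * ((1 + e)^2 - 4 * e * p^2))"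

lemma partner_weight_ge:
  fixes e p q :: real
  assumes "p^2 + q^2 = 1" "0 < e"
  shows "((1 - e) * p)^2 + ((1 + e) * q)^2 \<ge> (1 - e)^2"
proof -
  have "((1 - e) * p)^2 + ((1 + e) * q)^2 = (1 - e)^2 + 4 * e * q^2" using assms(1) by algebra
  then show ?thesis using assms(2) by simp
qed

lemma partner_gaps:
  fixes e C p q r N :: real
  assumes "p^2 + q^2 = 1" "N = ((1 - e) * p)^2 + ((1 + e) * q)^2" "N > 0" "r^2 = N - C^2"
  defines "p2 \<equiv> (C * (1 - e) * p - r * (1 + e) * q) / N"
    and "q2 \<equiv> (C * (1 + e) * q + r * (1 - e) * p) / N"
    and "p3 \<equiv> (C * (1 - e) * p + r * (1 + e) * q) / N"
    and "q3 \<equiv> (C * (1 + e) * q - r * (1 - e) * p) / N"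
  shows "N * (1 - p * p2 - q * q2) = N - C * ((1 - e) * p^2 + (1 + e) * q^2) + 2 * e * r * p * q"
    and "N * (1 - p * p3 - q * q3) = N - C * ((1 - e) * p^2 + (1 + e) * q^2) - 2 * e * r * p * q"
    and "N * (1 - p2 * p3 - q2 * q3) = 2 * r^2"
proof -
  have "N * (1 - p * p2 - q * q2)
      = N - p * (C * (1 - e) * p - r * (1 + e) * q) - q * (C * (1 + e) * q + r * (1 - e) * p)"
    unfolding p2_def q2_def using assms(3) by (simp add: field_simps)
  then show "N * (1 - p * p2 - q * q2) = N - C * ((1 - e) * p^2 + (1 + e) * q^2) + 2 * e * r * p * q"
    by algebra
  have "N * (1 - p * p3 - q * q3)
      = N - p * (C * (1 - e) * p + r * (1 + e) * q) - q * (C * (1 + e) * q - r * (1 - e) * p)"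
    unfolding p3_def q3_def using assms(3) by (simp add: field_simps)
  then show "N * (1 - p * p3 - q * q3) = N - C * ((1 - e) * p^2 + (1 + e) * q^2) - 2 * e * r * p * q"
    by algebra
  have "N * (1 - p2 * p3 - q2 * q3)
      = (N^2 - (C * (1 - e) * p - r * (1 + e) * q) * (C * (1 - e) * p + r * (1 + e) * q)
          - (C * (1 + e) * q + r * (1 - e) * p) * (C * (1 + e) * q - r * (1 - e) * p)) / N"
    unfolding p2_def q2_def p3_def q3_def using assms(3) by (simp add: field_simps power2_eq_square)
  also have "\<dots> = (N * (2 * r^2)) / N"
    using assms(2,4) by (intro arg_cong[where f = "\<lambda>x. x / N"]) algebra
  finally show "N * (1 - p2 * p3 - q2 * q3) = 2 * r^2" using assms(3) by simp
qed

text \<open>The first identity says that the sum of the three gaps, i.e. K times the perimeter, does not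
  depend on the vertex: the 3-periodics have constant perimeter.\<close>
lemma nagel_weights_of_partners:
  fixes e C p q r N :: real
  assumes pq: "p^2 + q^2 = 1" and e: "0 < e" "e < 1" and C: "2 * C = e^2 - 1"
    and N: "N = ((1 - e) * p)^2 + ((1 + e) * q)^2" and r: "r^2 = N - C^2"
  defines "p2 \<equiv> (C * (1 - e) * p - r * (1 + e) * q) / N"
    and "q2 \<equiv> (C * (1 + e) * q + r * (1 - e) * p) / N"
    and "p3 \<equiv> (C * (1 - e) * p + r * (1 + e) * q) / N"
    and "q3 \<equiv> (C * (1 + e) * q - r * (1 - e) * p) / N"
  defines "m12 \<equiv> 1 - p * p2 - q * q2" and "m13 \<equiv> 1 - p * p3 - q * q3"
    and "m23 \<equiv> 1 - p2 * p3 - q2 * q3"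
  shows "m12 + m13 + m23 = (9 - e^2) / 2"
    and "((m12 + m13 - m23) * p + (m12 + m23 - m13) * p2 + (m13 + m23 - m12) * p3)
      / (m12 + m13 + m23) = nagel_x e p" (is "?X / _ = _")
    and "((m12 + m13 - m23) * q + (m12 + m23 - m13) * q2 + (m13 + m23 - m12) * q3)
      / (m12 + m13 + m23) = nagel_y e p q" (is "?Y / _ = _")
proof -
  define g where "g = (1 - e) * p^2 + (1 + e) * q^2"
  have "N \<ge> (1 - e)^2" unfolding N by (rule partner_weight_ge[OF pq e(1)])
  moreover have "(1 - e)^2 > 0" using e by simp
  ultimately have N0: "N > 0" by linarith
  then have N2: "N^2 \<noteq> 0" by simp
  have m: "N * m12 = N - C * g + 2 * e * r * p * q" "N * m13 = N - C * g - 2 * e * r * p * q"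
      "N * m23 = 2 * r^2"
    using partner_gaps[OF pq N N0 r]
    unfolding m12_def m13_def m23_def p2_def q2_def p3_def q3_def g_def by simp_all
  have np: "N * p2 = C * (1 - e) * p - r * (1 + e) * q" "N * q2 = C * (1 + e) * q + r * (1 - e) * p"
      "N * p3 = C * (1 - e) * p + r * (1 + e) * q" "N * q3 = C * (1 + e) * q - r * (1 - e) * p"
    unfolding p2_def q2_def p3_def q3_def using N0 by simp_all
  have "N * (m12 + m13 + m23) = N * ((9 - e^2) / 2)"
    unfolding distrib_left m using pq C N r unfolding g_def by algebra
  with N0 show sum: "m12 + m13 + m23 = (9 - e^2) / 2" by simp
  have "(1 + e)^2 - 4 * e * p^2 = N" using pq unfolding N by algebra
  with N0 e have den: "(3 - e) * ((1 + e)^2 - 4 * e * p^2) \<noteq> 0"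
      "(3 + e) * ((1 + e)^2 - 4 * e * p^2) \<noteq> 0"
    by simp_all
  have "e^2 < 1" using e by (simp add: power_less_one_iff)
  then have tot: "(9 - e^2) / 2 \<noteq> 0" by simp
  have "N^2 * ?X = (N * m12 + N * m13 - N * m23) * p * N + (N * m12 + N * m23 - N * m13) * (N * p2)
      + (N * m13 + N * m23 - N * m12) * (N * p3)"
    by (simp add: power2_eq_square algebra_simps)
  then have "N^2 * (?X * ((3 - e) * ((1 + e)^2 - 4 * e * p^2)))
      = N^2 * (e * (1 + e) * p * (4 * p^2 - (1 + e) * (3 - e)) * ((9 - e^2) / 2))"
    unfolding mult.assoc[symmetric] m np using pq C N r unfolding g_def by algebra
  then show "?X / (m12 + m13 + m23) = nagel_x e p"
    unfolding sum nagel_x_def frac_eq_eq[OF tot den(1)] by (simp only: mult_left_cancel[OF N2])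
  have "N^2 * ?Y = (N * m12 + N * m13 - N * m23) * q * N + (N * m12 + N * m23 - N * m13) * (N * q2)
      + (N * m13 + N * m23 - N * m12) * (N * q3)"
    by (simp add: power2_eq_square algebra_simps)
  then have "N^2 * (?Y * ((3 + e) * ((1 + e)^2 - 4 * e * p^2)))
      = N^2 * (e * (1 - e) * q * (4 * p^2 - (1 + e)^2) * ((9 - e^2) / 2))"
    unfolding mult.assoc[symmetric] m np using pq C N r unfolding g_def by algebra
  then show "?Y / (m12 + m13 + m23) = nagel_y e p q"
    unfolding sum nagel_y_def frac_eq_eq[OF tot den(2)] by (simp only: mult_left_cancel[OF N2])
qed

lemma three_periodic_scaled_iff:
  fixes a b p1 q1 p2 q2 p3 q3 :: real
  assumes "a > 0" "b > 0" "p1^2 + q1^2 = 1" "p2^2 + q2^2 = 1" "p3^2 + q3^2 = 1"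
  shows "three_periodic a b (a * p1, b * q1) (a * p2, b * q2) (a * p3, b * q3) \<longleftrightarrow>
    (p1, q1) \<noteq> (p2, q2) \<and> (p1, q1) \<noteq> (p3, q3) \<and> (p2, q2) \<noteq> (p3, q3) \<and>
    (\<exists>K > 0. 1 - p1 * p2 - q1 * q2 = K * dist (a * p1, b * q1) (a * p2, b * q2)
      \<and> 1 - p1 * p3 - q1 * q3 = K * dist (a * p1, b * q1) (a * p3, b * q3)
      \<and> 1 - p2 * p3 - q2 * q3 = K * dist (a * p2, b * q2) (a * p3, b * q3))"
    (is "?T \<longleftrightarrow> ?d12 \<and> ?d13 \<and> ?d23 \<and> (\<exists>K > 0. ?gaps K)")
proof (cases "?d12 \<and> ?d13 \<and> ?d23")
  case True
  have ab: "a \<noteq> 0" "b \<noteq> 0" using assms(1,2) by simp_all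
  have "det2 ((a * p2, b * q2) - (a * p1, b * q1)) ((a * p3, b * q3) - (a * p1, b * q1)) \<noteq> 0"
    using unit_circle_det_ne_0[OF assms(3-5)] True ab unfolding det2_scaled by simp
  then have "?T \<longleftrightarrow> (\<exists>K.
      tangent_gap a b (a * p1, b * q1) (a * p2, b * q2) = K * dist (a * p1, b * q1) (a * p2, b * q2)
    \<and> tangent_gap a b (a * p1, b * q1) (a * p3, b * q3) = K * dist (a * p1, b * q1) (a * p3, b * q3)
    \<and> tangent_gap a b (a * p2, b * q2) (a * p3, b * q3) = K * dist (a * p2, b * q2) (a * p3, b * q3))"
    using assms(3-5) by (intro three_periodic_iff_gap_ratio) (simp_all add: on_ellipse_scaled ab)
  then have "?T \<longleftrightarrow> (\<exists>K. ?gaps K)" by (simp only: tangent_gap_scaled[OF ab])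
  moreover have "K > 0" if "?gaps K" for K
    using that unit_gap_pos[OF assms(3,4)] True zero_le_dist[of "(a * p1, b * q1)" "(a * p2, b * q2)"]
    by (smt (verit) mult_nonpos_nonneg)
  ultimately show ?thesis using True by blast
next
  case False
  then have "det2 ((a * p2, b * q2) - (a * p1, b * q1)) ((a * p3, b * q3) - (a * p1, b * q1)) = 0"
    unfolding det2_scaled by auto
  with False show ?thesis unfolding three_periodic_def by blast
qed

lemma gap_ratios_iff_paired:
  fixes a b p1 q1 p2 q2 p3 q3 :: real
  assumes ab: "0 < b" "b < a"
    and u: "p1^2 + q1^2 = 1" "p2^2 + q2^2 = 1" "p3^2 + q3^2 = 1"
    and d: "(p1, q1) \<noteq> (p2, q2)" "(p1, q1) \<noteq> (p3, q3)" "(p2, q2) \<noteq> (p3, q3)"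
  defines "e \<equiv> periodic_e a b"
  shows "(\<exists>K > 0. 1 - p1 * p2 - q1 * q2 = K * dist (a * p1, b * q1) (a * p2, b * q2)
      \<and> 1 - p1 * p3 - q1 * q3 = K * dist (a * p1, b * q1) (a * p3, b * q3)
      \<and> 1 - p2 * p3 - q2 * q3 = K * dist (a * p2, b * q2) (a * p3, b * q3)) \<longleftrightarrow>
    (1 - e) * p1 * p2 + (1 + e) * q1 * q2 = (e^2 - 1) / 2
    \<and> (1 - e) * p1 * p3 + (1 + e) * q1 * q3 = (e^2 - 1) / 2
    \<and> (1 - e) * p2 * p3 + (1 + e) * q2 * q3 = (e^2 - 1) / 2"
    (is "(\<exists>K > 0. ?gaps K) \<longleftrightarrow> ?paired e ((e^2 - 1) / 2)")
proof -
  define c2 where "c2 = a^2 - b^2"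
  have c2: "c2 > 0" unfolding c2_def using ab by (simp add: power_strict_mono)
  have ratio: "?gaps K \<longleftrightarrow> ?paired (K^2 * c2) (1 - K^2 * (a^2 + b^2))" if "K > 0" for K
    unfolding c2_def using unit_gap_eq_ratio_dist_iff[OF that] u d by simp
  have e: "c2 * e^2 + 2 * (a^2 + b^2) * e = 3 * c2" "e > 0"
    unfolding c2_def e_def using periodic_e[OF ab] by simp_all
  have params: "1 - K^2 * (a^2 + b^2) = (e^2 - 1) / 2" if "K^2 * c2 = e" for K
  proof -
    have "c2 * (2 * (1 - K^2 * (a^2 + b^2)) - (e^2 - 1))
        = 3 * c2 - 2 * (a^2 + b^2) * (K^2 * c2) - c2 * e^2"
      by (simp add: algebra_simps)
    also have "\<dots> = 0" using that e(1) by simp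
    finally have "c2 * (2 * (1 - K^2 * (a^2 + b^2)) - (e^2 - 1)) = 0" .
    with c2 show ?thesis by simp
  qed
  show ?thesis
  proof
    assume "\<exists>K > 0. ?gaps K"
    then obtain K where K: "K > 0" "?paired (K^2 * c2) (1 - K^2 * (a^2 + b^2))" using ratio by blast
    have "K^2 * c2 > 0" "1 - K^2 * (a^2 + b^2) < 1 - K^2 * c2"
      using K(1) c2 ab unfolding c2_def by (simp_all add: algebra_simps)
    then have "(K^2 * c2)^2 = 1 + 2 * (1 - K^2 * (a^2 + b^2))"
      using paired_triangle_closure[OF u d] K(2) by blast
    then have "c2 * (K^2 * c2)^2 + 2 * (a^2 + b^2) * (K^2 * c2) = 3 * c2" by algebra
    then have "K^2 * c2 = e"
      unfolding e_def by (rule periodic_e_unique[OF ab \<open>K^2 * c2 > 0\<close>, folded c2_def])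
    with K(2) params show "?paired e ((e^2 - 1) / 2)" by simp
  next
    assume "?paired e ((e^2 - 1) / 2)"
    moreover have "(sqrt (e / c2))^2 * c2 = e" "sqrt (e / c2) > 0" using e(2) c2 by simp_all
    ultimately show "\<exists>K > 0. ?gaps K" using ratio params by metis
  qed
qed

lemma three_periodic_scaled_iff_paired:
  fixes a b p1 q1 p2 q2 p3 q3 :: real
  assumes "0 < b" "b < a" "p1^2 + q1^2 = 1" "p2^2 + q2^2 = 1" "p3^2 + q3^2 = 1"
  defines "e \<equiv> periodic_e a b"
  shows "three_periodic a b (a * p1, b * q1) (a * p2, b * q2) (a * p3, b * q3) \<longleftrightarrow>
    (p1, q1) \<noteq> (p2, q2) \<and> (p1, q1) \<noteq> (p3, q3) \<and> (p2, q2) \<noteq> (p3, q3)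
    \<and> (1 - e) * p1 * p2 + (1 + e) * q1 * q2 = (e^2 - 1) / 2
    \<and> (1 - e) * p1 * p3 + (1 + e) * q1 * q3 = (e^2 - 1) / 2
    \<and> (1 - e) * p2 * p3 + (1 + e) * q2 * q3 = (e^2 - 1) / 2"
proof -
  have a: "a > 0" using assms(1,2) by simp
  show ?thesis
    unfolding three_periodic_scaled_iff[OF a assms(1,3-5)] e_def
    using gap_ratios_iff_paired[OF assms(1-5)] by blast
qed

lemma tri_center_nagel_partners:
  fixes a b e C p q r N p2 q2 p3 q3 :: real
  assumes ab: "0 < b" "b < a" and pq: "p^2 + q^2 = 1"
  defines "e \<equiv> periodic_e a b" and "C \<equiv> (e^2 - 1) / 2"
    and "N \<equiv> ((1 - e) * p)^2 + ((1 + e) * q)^2"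
  assumes r: "r^2 = N - C^2"
    and p2: "p2 = (C * (1 - e) * p - r * (1 + e) * q) / N"
    and q2: "q2 = (C * (1 + e) * q + r * (1 - e) * p) / N"
    and p3: "p3 = (C * (1 - e) * p + r * (1 + e) * q) / N"
    and q3: "q3 = (C * (1 + e) * q - r * (1 - e) * p) / N"
    and u: "p2^2 + q2^2 = 1" "p3^2 + q3^2 = 1"
    and T: "three_periodic a b (a * p, b * q) (a * p2, b * q2) (a * p3, b * q3)"
  shows "tri_center nagel_h (a * p, b * q) (a * p2, b * q2) (a * p3, b * q3)
    = (a * nagel_x e p, b * nagel_y e p q)"
proof -
  have a: "a > 0" using ab by simp
  obtain K where K: "K > 0" "1 - p * p2 - q * q2 = K * dist (a * p, b * q) (a * p2, b * q2)"
      "1 - p * p3 - q * q3 = K * dist (a * p, b * q) (a * p3, b * q3)"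
      "1 - p2 * p3 - q2 * q3 = K * dist (a * p2, b * q2) (a * p3, b * q3)"
    and d: "(p, q) \<noteq> (p2, q2)" "(p, q) \<noteq> (p3, q3)" "(p2, q2) \<noteq> (p3, q3)"
    using three_periodic_scaled_iff[OF a ab(1) pq u] T by blast
  define m12 where "m12 = 1 - p * p2 - q * q2"
  define m13 where "m13 = 1 - p * p3 - q * q3"
  define m23 where "m23 = 1 - p2 * p3 - q2 * q3"
  have m: "m12 > 0" "m13 > 0" "m23 > 0"
    unfolding m12_def m13_def m23_def using unit_gap_pos pq u d by simp_all
  have e: "0 < e" "e < 1" unfolding e_def using periodic_e[OF ab] by simp_all
  have "tri_center nagel_h (a * p, b * q) (a * p2, b * q2) (a * p3, b * q3) = (1 / (m23 + m13 + m12)) *\<^sub>R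
      ((m13 + m12 - m23) *\<^sub>R (a * p, b * q) + (m12 + m23 - m13) *\<^sub>R (a * p2, b * q2)
        + (m23 + m13 - m12) *\<^sub>R (a * p3, b * q3))"
  proof (rule tri_center_nagel_eq)
    show "m23 = K * dist (a * p2, b * q2) (a * p3, b * q3)" "m13 = K * dist (a * p3, b * q3) (a * p, b * q)"
      "m12 = K * dist (a * p, b * q) (a * p2, b * q2)"
      using K unfolding m12_def m13_def m23_def by (simp_all add: dist_commute)
  qed (use K m in simp_all)
  also have "\<dots> = (a * (((m12 + m13 - m23) * p + (m12 + m23 - m13) * p2 + (m13 + m23 - m12) * p3)
        / (m12 + m13 + m23)),
      b * (((m12 + m13 - m23) * q + (m12 + m23 - m13) * q2 + (m13 + m23 - m12) * q3)
        / (m12 + m13 + m23)))"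
    by (simp add: algebra_simps add_divide_distrib diff_divide_distrib)
  also have "\<dots> = (a * nagel_x e p, b * nagel_y e p q)"
    using nagel_weights_of_partners[OF pq e _ _ r] unfolding m12_def m13_def m23_def
      p2 q2 p3 q3 N_def C_def by simp
  finally show ?thesis .
qed

definition nagel_curve :: "real \<Rightarrow> real \<Rightarrow> pt set" where
  "nagel_curve a b = (\<lambda>(p, q). (a * nagel_x (periodic_e a b) p, b * nagel_y (periodic_e a b) p q))
     ` {(p, q). p^2 + q^2 = 1}"

lemma locus_nagel_subset:
  assumes ab: "0 < b" "b < a"
  shows "locus a b nagel_h \<subseteq> nagel_curve a b"
proof
  fix X assume "X \<in> locus a b nagel_h"
  then obtain P1 P2 P3 where X: "X = tri_center nagel_h P1 P2 P3" and T: "three_periodic a b P1 P2 P3"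
    unfolding locus_def by blast
  have a: "a \<noteq> 0" "b \<noteq> 0" using ab by simp_all
  define e where "e = periodic_e a b"
  define C where "C = (e^2 - 1) / 2"
  obtain p1 q1 p2 q2 p3 q3 where P: "P1 = (a * p1, b * q1)" "P2 = (a * p2, b * q2)" "P3 = (a * p3, b * q3)"
    using a by (metis mult.commute nonzero_eq_divide_eq prod.collapse)
  have u: "p1^2 + q1^2 = 1" "p2^2 + q2^2 = 1" "p3^2 + q3^2 = 1"
    using T unfolding three_periodic_def P on_ellipse_scaled[OF a] by simp_all
  have d: "(p1, q1) \<noteq> (p2, q2)" "(p1, q1) \<noteq> (p3, q3)" "(p2, q2) \<noteq> (p3, q3)"
    and g: "(1 - e) * p1 * p2 + (1 + e) * q1 * q2 = C" "(1 - e) * p1 * p3 + (1 + e) * q1 * q3 = C"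
    using T three_periodic_scaled_iff_paired[OF ab u] unfolding P e_def C_def by blast+
  have e: "0 < e" "e < 1" unfolding e_def using periodic_e[OF ab] by simp_all
  define N where "N = ((1 - e) * p1)^2 + ((1 + e) * q1)^2"
  have "(e - 1) * (e + 3) < 0" using e by (simp add: mult_neg_pos)
  then have "C < 1 - e" unfolding C_def by (simp add: field_simps power2_eq_square)
  then have N: "N > 0" unfolding N_def using paired_weight_pos[OF u(1) g(1) e(1)] by blast
  obtain r where "r^2 = N - C^2"
      "p2 = (C * (1 - e) * p1 - r * (1 + e) * q1) / N" "q2 = (C * (1 + e) * q1 + r * (1 - e) * p1) / N"
      "p3 = (C * (1 - e) * p1 + r * (1 + e) * q1) / N" "q3 = (C * (1 + e) * q1 - r * (1 - e) * p1) / N"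
    using paired_points_eq[OF N_def N u(2,3) d(3) g] by blast
  then have "X = (a * nagel_x e p1, b * nagel_y e p1 q1)"
    using tri_center_nagel_partners[OF ab u(1) _ _ _ _ _ u(2,3)] T unfolding X P e_def C_def N_def by blast
  then show "X \<in> nagel_curve a b" unfolding nagel_curve_def e_def using u(1) by auto
qed

lemma nagel_curve_subset_locus:
  assumes ab: "0 < b" "b < a"
  shows "nagel_curve a b \<subseteq> locus a b nagel_h"
proof
  fix X assume "X \<in> nagel_curve a b"
  then obtain p q where pq: "p^2 + q^2 = 1"
    and X: "X = (a * nagel_x (periodic_e a b) p, b * nagel_y (periodic_e a b) p q)"
    unfolding nagel_curve_def by auto
  define e where "e = periodic_e a b"
  define C where "C = (e^2 - 1) / 2"
  define N where "N = ((1 - e) * p)^2 + ((1 + e) * q)^2"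
  have e: "0 < e" "e < 1" unfolding e_def using periodic_e[OF ab] by simp_all
  have "(e - 1) * (e + 3) < 0" using e by (simp add: mult_neg_pos)
  then have eC: "C < 1 - e" unfolding C_def by (simp add: field_simps power2_eq_square)
  have "C^2 = (1 - e)^2 * ((1 + e) / 2)^2" unfolding C_def by (simp add: power2_eq_square field_simps)
  also have "\<dots> < (1 - e)^2 * 1"
    using e by (intro mult_strict_left_mono) (simp_all add: power_less_one_iff)
  also have "\<dots> \<le> N" unfolding N_def using partner_weight_ge[OF pq e(1)] by simp
  finally have NC: "C^2 < N" .
  then have N: "N > 0" by (smt (verit) zero_le_power2)
  define r where "r = sqrt (N - C^2)"
  have r: "r^2 = N - C^2" "r > 0" unfolding r_def using NC by simp_all
  define p2 where "p2 = (C * (1 - e) * p - r * (1 + e) * q) / N"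
  define q2 where "q2 = (C * (1 + e) * q + r * (1 - e) * p) / N"
  define p3 where "p3 = (C * (1 - e) * p + r * (1 + e) * q) / N"
  define q3 where "q3 = (C * (1 + e) * q - r * (1 - e) * p) / N"
  have "p2^2 + q2^2 = 1 \<and> (1 - e) * p * p2 + (1 + e) * q * q2 = C"
    unfolding unit_paired_iff[OF N_def N] p2_def q2_def using r(1) by blast
  moreover have "p3^2 + q3^2 = 1 \<and> (1 - e) * p * p3 + (1 + e) * q * q3 = C"
    unfolding unit_paired_iff[OF N_def N] p3_def q3_def using r(1)
    by (intro exI[of _ "- r"]) simp
  ultimately have u: "p2^2 + q2^2 = 1" "p3^2 + q3^2 = 1"
    and g: "(1 - e) * p * p2 + (1 + e) * q * q2 = C" "(1 - e) * p * p3 + (1 + e) * q * q3 = C"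
    by simp_all
  have d23: "(p2, q2) \<noteq> (p3, q3)"
  proof
    assume "(p2, q2) = (p3, q3)"
    then have "r * (1 + e) * q = 0" "r * (1 - e) * p = 0"
      unfolding p2_def q2_def p3_def q3_def using N by (simp_all add: divide_cancel_right)
    then show False using r(2) e pq by simp
  qed
  have d1: "(p, q) \<noteq> (p2, q2)" "(p, q) \<noteq> (p3, q3)"
    using g paired_self_gt[OF pq e(1) eC] by auto
  have "((1 - e) * p2 * p3 + (1 + e) * q2 * q3 - C) * N = (e^2 - 1 - 2 * C) * (e + 1 - C - 2 * e * p^2)"
    unfolding p2_def q2_def p3_def q3_def by (rule partners_pairing_defect[OF pq N_def N r(1)])
  moreover have "e^2 - 1 - 2 * C = 0" unfolding C_def by simp
  ultimately have "(1 - e) * p2 * p3 + (1 + e) * q2 * q3 = C" using N by simp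
  with d1 d23 have T: "three_periodic a b (a * p, b * q) (a * p2, b * q2) (a * p3, b * q3)"
    using three_periodic_scaled_iff_paired[OF ab pq u] g unfolding e_def C_def by blast
  have "X = tri_center nagel_h (a * p, b * q) (a * p2, b * q2) (a * p3, b * q3)"
    unfolding X tri_center_nagel_partners[OF ab pq r(1)[unfolded N_def C_def e_def] _ _ _ _ u T,
      OF p2_def[unfolded N_def C_def e_def] q2_def[unfolded N_def C_def e_def]
        p3_def[unfolded N_def C_def e_def] q3_def[unfolded N_def C_def e_def]] e_def ..
  with T show "X \<in> locus a b nagel_h" unfolding locus_def by blast
qed

lemma nagel_xy_scaled:
  fixes a b p q :: real
  assumes ab: "0 < b" "b < a"
  defines "e \<equiv> periodic_e a b"
  defines "A \<equiv> (a^2 - b^2) * (1 + e)^2 / (4 * a)" and "B \<equiv> (a^2 - b^2) * (1 - e)^2 / (4 * b)"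
    and "N \<equiv> (1 + e)^2 - 4 * e * p^2"
  shows "a * nagel_x e p = A * (p * (4 * p^2 - (1 + e) * (3 - e)) / N)"
    and "b * nagel_y e p q = B * (q * (4 * p^2 - (1 + e)^2) / N)"
proof -
  have e: "0 < e" "e < 1" "(a^2 - b^2) * e^2 + 2 * (a^2 + b^2) * e = 3 * (a^2 - b^2)"
    unfolding e_def using periodic_e[OF ab] by simp_all
  have a: "a > 0" "b > 0" using ab by simp_all
  have "4 * a^2 * e * (1 + e) = (a^2 - b^2) * (1 + e)^2 * (3 - e)"
    using e(3) by algebra
  then have kx: "a * e * (1 + e) / (3 - e) = A"
    unfolding A_def using a e by (simp add: frac_eq_eq power2_eq_square algebra_simps)
  have "4 * b^2 * e * (1 - e) = (a^2 - b^2) * (1 - e)^2 * (3 + e)"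
    using e(3) by algebra
  then have ky: "b * e * (1 - e) / (3 + e) = B"
    unfolding B_def using a e by (simp add: frac_eq_eq power2_eq_square algebra_simps)
  show "a * nagel_x e p = A * (p * (4 * p^2 - (1 + e) * (3 - e)) / N)"
    unfolding nagel_x_def N_def[symmetric] kx[symmetric] by simp
  show "b * nagel_y e p q = B * (q * (4 * p^2 - (1 + e)^2) / N)"
    unfolding nagel_y_def N_def[symmetric] ky[symmetric] by simp
qed

lemma circle_image_eq_ellipse:
  fixes xi :: "real \<Rightarrow> real" and eta :: "real \<Rightarrow> real \<Rightarrow> real" and A B :: real
  assumes "A > 0" "B > 0"
    and xi: "continuous_on {- 1..1} xi" "xi (- 1) = - 1" "xi 1 = 1"
    and eta: "\<And>p q. eta p (- q) = - eta p q"
    and circle: "\<And>p q. p^2 + q^2 = 1 \<Longrightarrow> (xi p)^2 + (eta p q)^2 = 1"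
  shows "(\<lambda>(p, q). (A * xi p, B * eta p q)) ` {(p, q). p^2 + q^2 = 1}
    = {P. (fst P)^2 / A^2 + (snd P)^2 / B^2 = 1}"
proof
  show "(\<lambda>(p, q). (A * xi p, B * eta p q)) ` {(p, q). p^2 + q^2 = 1}
      \<subseteq> {P. (fst P)^2 / A^2 + (snd P)^2 / B^2 = 1}"
    using circle assms(1,2) by (auto simp: power_mult_distrib)
next
  show "{P. (fst P)^2 / A^2 + (snd P)^2 / B^2 = 1}
      \<subseteq> (\<lambda>(p, q). (A * xi p, B * eta p q)) ` {(p, q). p^2 + q^2 = 1}"
  proof
    fix X assume "X \<in> {P. (fst P)^2 / A^2 + (snd P)^2 / B^2 = 1}"
    then have X: "(fst X / A)^2 + (snd X / B)^2 = 1" by (simp add: power_divide)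
    then have "(fst X / A)^2 \<le> 1" using zero_le_power2[of "snd X / B"] by linarith
    then have "- 1 \<le> fst X / A \<and> fst X / A \<le> 1" unfolding abs_square_le_1 abs_le_iff by linarith
    then obtain p where p: "- 1 \<le> p" "p \<le> 1" "xi p = fst X / A"
      using IVT'[of xi "- 1" "fst X / A" 1] xi by auto
    define q where "q = sqrt (1 - p^2)"
    have "p^2 \<le> 1" using p by (simp add: abs_square_le_1 abs_le_iff)
    then have pq: "p^2 + q^2 = 1" "p^2 + (- q)^2 = 1" unfolding q_def by simp_all
    then have "(eta p q)^2 = (snd X / B)^2" using circle[OF pq(1)] X p(3) by simp
    then obtain q' where "p^2 + q'^2 = 1" "eta p q' = snd X / B"
      using pq eta by (metis power2_eq_iff)
    then have "X = (A * xi p, B * eta p q')" "(p, q') \<in> {(p, q). p^2 + q^2 = 1}"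
      using p(3) assms(1,2) by simp_all
    then show "X \<in> (\<lambda>(p, q). (A * xi p, B * eta p q)) ` {(p, q). p^2 + q^2 = 1}" by auto
  qed
qed

lemma nagel_curve_eq_ellipse:
  fixes a b :: real
  assumes ab: "0 < b" "b < a"
  defines "e \<equiv> periodic_e a b"
  defines "A \<equiv> (a^2 - b^2) * (1 + e)^2 / (4 * a)" and "B \<equiv> (a^2 - b^2) * (1 - e)^2 / (4 * b)"
  shows "nagel_curve a b = {P. (fst P)^2 / A^2 + (snd P)^2 / B^2 = 1}"
proof -
  define N where "N p = (1 + e)^2 - 4 * e * p^2" for p
  define xi where "xi p = p * (4 * p^2 - (1 + e) * (3 - e)) / N p" for p
  define eta where "eta p q = q * (4 * p^2 - (1 + e)^2) / N p" for p q
  have e: "0 < e" "e < 1" unfolding e_def using periodic_e[OF ab] by simp_all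
  have N: "N p > 0" if "p^2 \<le> 1" for p
  proof -
    have "N p \<ge> (1 - e)^2" unfolding N_def using that e(1) by (simp add: power2_eq_square algebra_simps)
    then show ?thesis using e(2) by (smt (verit) zero_less_power2)
  qed
  have "nagel_curve a b = (\<lambda>(p, q). (A * xi p, B * eta p q)) ` {(p, q). p^2 + q^2 = 1}"
    unfolding nagel_curve_def xi_def eta_def N_def nagel_xy_scaled[OF ab] A_def B_def e_def ..
  also have "\<dots> = {P. (fst P)^2 / A^2 + (snd P)^2 / B^2 = 1}"
  proof (rule circle_image_eq_ellipse)
    show "A > 0" "B > 0" unfolding A_def B_def using ab e by (simp_all add: power_strict_mono)
    have "\<forall>p \<in> {- 1..1}. N p \<noteq> 0" using N by (force simp: abs_square_le_1 abs_le_iff)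
    moreover have "continuous_on {- 1..1} N" unfolding N_def by (intro continuous_intros)
    ultimately show "continuous_on {- 1..1} xi" unfolding xi_def
      by (intro continuous_on_divide continuous_intros)
    have "4 - (1 + e) * (3 - e) = N 1" "N (- 1) = N 1"
      unfolding N_def by (simp_all add: algebra_simps power2_eq_square)
    with N[of 1] show "xi (- 1) = - 1" "xi 1 = 1" unfolding xi_def by simp_all
    show "eta p (- q) = - eta p q" for p q unfolding eta_def by simp
    show "(xi p)^2 + (eta p q)^2 = 1" if "p^2 + q^2 = 1" for p q
    proof -
      have "p^2 \<le> 1" using that zero_le_power2[of q] by linarith
      then have "N p \<noteq> 0" using N by (metis less_irrefl)
      have "(xi p)^2 + (eta p q)^2
          = (p^2 * (4 * p^2 - (1 + e) * (3 - e))^2 + q^2 * (4 * p^2 - (1 + e)^2)^2) / (N p)^2"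
        unfolding xi_def eta_def by (simp add: power_divide power_mult_distrib add_divide_distrib)
      also have "p^2 * (4 * p^2 - (1 + e) * (3 - e))^2 + q^2 * (4 * p^2 - (1 + e)^2)^2 = (N p)^2"
        using that unfolding N_def by algebra
      finally show ?thesis using \<open>N p \<noteq> 0\<close> by simp
    qed
  qed
  finally show ?thesis .
qed

theorem theorem1:
  fixes a b :: real
  assumes "a > b" and "b > 0"
  shows "let c2 = a^2 - b^2;
             \<delta> = sqrt (a^4 - a^2 * b^2 + b^4);
             a8 = (b^2 - \<delta>)^2 / (a * c2);
             b8 = (a^2 - \<delta>)^2 / (b * c2)
         in locus a b nagel_h = {P. (fst P)^2 / a8^2 + (snd P)^2 / b8^2 = 1}"
proof -
  have "locus a b nagel_h = nagel_curve a b"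
    using locus_nagel_subset nagel_curve_subset_locus assms by blast
  also have "\<dots> = {P. (fst P)^2 / ((a^2 - b^2) * (1 + periodic_e a b)^2 / (4 * a))^2
                       + (snd P)^2 / ((a^2 - b^2) * (1 - periodic_e a b)^2 / (4 * b))^2 = 1}"
    using assms by (intro nagel_curve_eq_ellipse) simp_all
  finally show ?thesis unfolding Let_def periodic_e_semi_axes[OF assms(2,1)] .
qed

end
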